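(* Let $d\ge0$ and let $$f=\sum_{i+j\le d}\frac{d!}{i!\,j!\,(d-(i+j))!}\,c_{i,j}\,u_3^{d-(i+j)}u_1^{i}u_2^{j},\qquad c_{i,j}\in\mathbb K[A],$$ be an irreducible contravariant of order $d$ of the ternary form of degree $n$. Then: (i) the vector space $C_d=\langle c_{i,j}: i+j\le d\rangle$ is an irreducible $\mathfrak{sl}_3$-submodule of $\mathbb K[A]$ isomorphic to $\Gamma_{0,d}$; (ii) $c_{0,0}$ is a highest vector of $C_d$, of weight $[0,d]$; (iii) $f=\sum_{i+j\le d}\frac{(-1)^{i+j}}{i!\,j!}\,\hat D_2^{j}\hat D_3^{i}(c_{0,0})\,u_3^{d-(i+j)}u_1^{i}u_2^{j}$.
   Context: $\mathbb K$ is a field of characteristic $0$, $n\ge1$, $\mathbb K[A]=\mathbb K[a_{i,j}: i,j\ge0,\ i+j\le n]$ is the coordinate ring of the space of ternary forms $\sum_{i+j\le n}\frac{n!}{i!j!(n-i-j)!}a_{i,j}x_1^{n-i-j}x_2^ix_3^j$. $\mathfrak{sl}_3$ acts by derivations on $\mathbb K[A,u_1,u_2,u_3]$; the operators for $E_{12},E_{23},E_{13},E_{21},E_{32},E_{31},E_{11}-E_{22},E_{22}-E_{33}$ are $D_1,D_2,D_3,\hat D_1,\hat D_2,\hat D_3,E_1,E_2$. On generators of $\mathbb K[A]$ (with $a_{i,j}=0$ if an index is negative or $i+j>n$): $D_1(a_{i,j})=i a_{i-1,j}$, $D_2(a_{i,j})=j a_{i+1,j-1}$, $D_3(a_{i,j})=j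 a_{i,j-1}$, $\hat D_1(a_{i,j})=(n-i-j)a_{i+1,j}$, $\hat D_2(a_{i,j})=i a_{i-1,j+1}$, $\hat D_3(a_{i,j})=(n-i-j)a_{i,j+1}$, $E_1(a_{i,j})=(n-2i-j)a_{i,j}$, $E_2(a_{i,j})=(i-j)a_{i,j}$. The variables $u_1,u_2,u_3$ span the dual of the standard module $\langle x_1,x_2,x_3\rangle$ (on which $D_1=-x_2\partial_{x_1}$, $D_2=-x_3\partial_{x_2}$, $D_3=-x_3\partial_{x_1}$, $\hat D_1=-x_1\partial_{x_2}$, $\hat D_2=-x_2\partial_{x_3}$, $\hat D_3=-x_1\partial_{x_3}$), so that $x_1u_1+x_2u_2+x_3u_3$ is invariant; explicitly $D_1=u_1\partial_{u_2}$, $D_2=u_2\partial_{u_3}$, $D_3=u_1\partial_{u_3}$, $\hat D_1=u_2\partial_{u_1}$, $\hat D_2=u_3\partial_{u_2}$, $\hat D_3=u_3\partial_{u_1}$, $E_1=u_1\partial_{u_1}-u_2\partial_{u_2}$, $E_2=u_2\partial_{u_2}-u_3\partial_{u_3}$ on the $u$'s. A contravariant of order $d$ is an element of $\mathbb K[A,u_1,u_2,u_3]$ homogeneous of degree $d$ in the $u$'s and $SL_3$-invariant (equivalently annihilated by all these derivations); "irreducible" is used in the classical sense (nonzero, not a polynomial in contravariants of smaller degree). $\Gamma_{m_1,m_2}$ denotes the irreducible finite-dimensional $\mathfrak{sl}_3$-module of highest weight $[m_1,m_2]$, i.e. generated by a nonzero vector $v$ (a highest vector) with $D_1v=D_2v=D_3v=0$,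 $E_1v=m_1v$, $E_2v=m_2v$. *)

theory Defs
  imports Complex_Main "HOL-Library.Poly_Mapping"
begin

text \<open>Variables: Av i j stands for a_{i,j} (only i+j \<le> n is used), U k for u_k (k = 1,2,3).\<close>

datatype var = Av nat nat | U nat

type_synonym 'k pol = "(var \<Rightarrow>\<^sub>0 nat) \<Rightarrow>\<^sub>0 'k"

definition Var :: "var \<Rightarrow> 'k::comm_ring_1 pol" where
  "Var v = Poly_Mapping.single (Poly_Mapping.single v 1) 1"

definition const :: "'k::comm_ring_1 \<Rightarrow> 'k pol" where
  "const c = Poly_Mapping.single 0 c"

definition sc :: "'k::comm_ring_1 \<Rightarrow> 'k pol \<Rightarrow> 'k pol" where
  "sc c p = const c * p"

definition acoef :: "nat \<Rightarrow> nat \<Rightarrow> nat \<Rightarrow> 'k::comm_ring_1 pol" where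
  "acoef n i j = (if i + j \<le> n then Var (Av i j) else 0)"

definition uu :: "nat \<Rightarrow> 'k::comm_ring_1 pol" where
  "uu k = Var (U k)"

definition Avars :: "nat \<Rightarrow> var set" where
  "Avars n = {Av i j | i j. i + j \<le> n}"

definition Uvars :: "var set" where
  "Uvars = {U 1, U 2, U 3}"

definition vars :: "'k::comm_ring_1 pol \<Rightarrow> var set" where
  "vars p = (\<Union>m \<in> Poly_Mapping.keys p. Poly_Mapping.keys (m :: var \<Rightarrow>\<^sub>0 nat))"

definition KA :: "nat \<Rightarrow> 'k::comm_ring_1 pol set" where
  "KA n = {p. vars p \<subseteq> Avars n}"

definition KAU :: "nat \<Rightarrow> 'k::comm_ring_1 pol set" where
  "KAU n = {p. vars p \<subseteq> Avars n \<union> Uvars}"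

definition pderiv_var :: "var \<Rightarrow> 'k::comm_ring_1 pol \<Rightarrow> 'k pol" where
  "pderiv_var v p =
     (\<Sum>m \<in> Poly_Mapping.keys p. Poly_Mapping.single (Poly_Mapping.update v (Poly_Mapping.lookup m v - 1) m)
                        (of_nat (Poly_Mapping.lookup m v) * Poly_Mapping.lookup p m))"

definition der :: "(var \<Rightarrow> 'k::comm_ring_1 pol) \<Rightarrow> 'k pol \<Rightarrow> 'k pol" where
  "der \<delta> p = (\<Sum>v \<in> vars p. pderiv_var v p * \<delta> v)"

text \<open>Values of the eight operators on the generators (n = degree of the ternary form).\<close>

definition gD1 :: "nat \<Rightarrow> var \<Rightarrow> 'k::comm_ring_1 pol" where
  "gD1 n v = (case v of
      Av i j \<Rightarrow> if i + j \<le> n then of_nat i * acoef n (i - 1) j else 0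
    | U k \<Rightarrow> if k = 2 then uu 1 else 0)"

definition gD2 :: "nat \<Rightarrow> var \<Rightarrow> 'k::comm_ring_1 pol" where
  "gD2 n v = (case v of
      Av i j \<Rightarrow> if i + j \<le> n then of_nat j * acoef n (i + 1) (j - 1) else 0
    | U k \<Rightarrow> if k = 3 then uu 2 else 0)"

definition gD3 :: "nat \<Rightarrow> var \<Rightarrow> 'k::comm_ring_1 pol" where
  "gD3 n v = (case v of
      Av i j \<Rightarrow> if i + j \<le> n then of_nat j * acoef n i (j - 1) else 0
    | U k \<Rightarrow> if k = 3 then uu 1 else 0)"

definition gDh1 :: "nat \<Rightarrow> var \<Rightarrow> 'k::comm_ring_1 pol" where
  "gDh1 n v = (case v of
      Av i j \<Rightarrow> if i + j \<le> n then of_nat (n - i - j) * acoef n (i + 1) j else 0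
    | U k \<Rightarrow> if k = 1 then uu 2 else 0)"

definition gDh2 :: "nat \<Rightarrow> var \<Rightarrow> 'k::comm_ring_1 pol" where
  "gDh2 n v = (case v of
      Av i j \<Rightarrow> if i + j \<le> n then of_nat i * acoef n (i - 1) (j + 1) else 0
    | U k \<Rightarrow> if k = 2 then uu 3 else 0)"

definition gDh3 :: "nat \<Rightarrow> var \<Rightarrow> 'k::comm_ring_1 pol" where
  "gDh3 n v = (case v of
      Av i j \<Rightarrow> if i + j \<le> n then of_nat (n - i - j) * acoef n i (j + 1) else 0
    | U k \<Rightarrow> if k = 1 then uu 3 else 0)"

definition gE1 :: "nat \<Rightarrow> var \<Rightarrow> 'k::comm_ring_1 pol" where
  "gE1 n v = (case v of
      Av i j \<Rightarrow> if i + j \<le> n then of_int (int n - 2 * int i - int j) * acoef n i j else 0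
    | U k \<Rightarrow> if k = 1 then uu 1 else if k = 2 then - uu 2 else 0)"

definition gE2 :: "nat \<Rightarrow> var \<Rightarrow> 'k::comm_ring_1 pol" where
  "gE2 n v = (case v of
      Av i j \<Rightarrow> if i + j \<le> n then of_int (int i - int j) * acoef n i j else 0
    | U k \<Rightarrow> if k = 2 then uu 2 else if k = 3 then - uu 3 else 0)"

definition D1 :: "nat \<Rightarrow> 'k::comm_ring_1 pol \<Rightarrow> 'k pol" where "D1 n = der (gD1 n)"
definition D2 :: "nat \<Rightarrow> 'k::comm_ring_1 pol \<Rightarrow> 'k pol" where "D2 n = der (gD2 n)"
definition D3 :: "nat \<Rightarrow> 'k::comm_ring_1 pol \<Rightarrow> 'k pol" where "D3 n = der (gD3 n)"
definition Dh1 :: "nat \<Rightarrow> 'k::comm_ring_1 pol \<Rightarrow> 'k pol" where "Dh1 n = der (gDh1 n)"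
definition Dh2 :: "nat \<Rightarrow> 'k::comm_ring_1 pol \<Rightarrow> 'k pol" where "Dh2 n = der (gDh2 n)"
definition Dh3 :: "nat \<Rightarrow> 'k::comm_ring_1 pol \<Rightarrow> 'k pol" where "Dh3 n = der (gDh3 n)"
definition E1 :: "nat \<Rightarrow> 'k::comm_ring_1 pol \<Rightarrow> 'k pol" where "E1 n = der (gE1 n)"
definition E2 :: "nat \<Rightarrow> 'k::comm_ring_1 pol \<Rightarrow> 'k pol" where "E2 n = der (gE2 n)"

definition sl3_ops :: "nat \<Rightarrow> ('k::comm_ring_1 pol \<Rightarrow> 'k pol) set" where
  "sl3_ops n = {D1 n, D2 n, D3 n, Dh1 n, Dh2 n, Dh3 n, E1 n, E2 n}"

definition udeg :: "(var \<Rightarrow>\<^sub>0 nat) \<Rightarrow> nat" where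
  "udeg m = Poly_Mapping.lookup m (U 1) + Poly_Mapping.lookup m (U 2) + Poly_Mapping.lookup m (U 3)"

definition contravariant :: "nat \<Rightarrow> nat \<Rightarrow> 'k::comm_ring_1 pol \<Rightarrow> bool" where
  "contravariant n d f \<longleftrightarrow> f \<in> KAU n \<and> (\<forall>m \<in> Poly_Mapping.keys f. udeg m = d)
      \<and> (\<forall>D \<in> sl3_ops n. D f = 0)"

definition Adeg_mon :: "nat \<Rightarrow> (var \<Rightarrow>\<^sub>0 nat) \<Rightarrow> nat" where
  "Adeg_mon n m = (\<Sum>v \<in> Avars n. Poly_Mapping.lookup m v)"

definition Adeg :: "nat \<Rightarrow> 'k::comm_ring_1 pol \<Rightarrow> nat" where
  "Adeg n p = Max (insert 0 (Adeg_mon n ` Poly_Mapping.keys p))"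

inductive_set alg_gen :: "'k::comm_ring_1 pol set \<Rightarrow> 'k pol set" for G where
  gen: "g \<in> G \<Longrightarrow> g \<in> alg_gen G"
| const: "const c \<in> alg_gen G"
| add: "p \<in> alg_gen G \<Longrightarrow> q \<in> alg_gen G \<Longrightarrow> p + q \<in> alg_gen G"
| mult: "p \<in> alg_gen G \<Longrightarrow> q \<in> alg_gen G \<Longrightarrow> p * q \<in> alg_gen G"

definition irreducible_contravariant :: "nat \<Rightarrow> nat \<Rightarrow> 'k::comm_ring_1 pol \<Rightarrow> bool" where
  "irreducible_contravariant n d f \<longleftrightarrow> contravariant n d f \<and> f \<noteq> 0 \<and>
     f \<notin> alg_gen {g. \<exists>e. contravariant n e g \<and> Adeg n g < Adeg n f}"

definition kspan :: "'k::comm_ring_1 pol set \<Rightarrow> 'k pol set" where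
  "kspan S = {p. \<exists>F l. finite F \<and> F \<subseteq> S \<and> p = (\<Sum>q \<in> F. sc (l q) q)}"

definition subspace_pol :: "'k::comm_ring_1 pol set \<Rightarrow> bool" where
  "subspace_pol V \<longleftrightarrow> 0 \<in> V \<and> (\<forall>p \<in> V. \<forall>q \<in> V. p + q \<in> V) \<and> (\<forall>c. \<forall>p \<in> V. sc c p \<in> V)"

definition sl3_submodule :: "nat \<Rightarrow> 'k::comm_ring_1 pol set \<Rightarrow> bool" where
  "sl3_submodule n V \<longleftrightarrow> V \<subseteq> KA n \<and> subspace_pol V \<and> (\<forall>D \<in> sl3_ops n. \<forall>p \<in> V. D p \<in> V)"

definition irreducible_sl3_submodule :: "nat \<Rightarrow> 'k::comm_ring_1 pol set \<Rightarrow> bool" where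
  "irreducible_sl3_submodule n V \<longleftrightarrow> sl3_submodule n V \<and> V \<noteq> {0} \<and>
     (\<forall>W. W \<subseteq> V \<longrightarrow> sl3_submodule n W \<longrightarrow> W = {0} \<or> W = V)"

definition highest_vector :: "nat \<Rightarrow> nat \<Rightarrow> nat \<Rightarrow> 'k::comm_ring_1 pol \<Rightarrow> bool" where
  "highest_vector n m1 m2 v \<longleftrightarrow> v \<noteq> 0 \<and> D1 n v = 0 \<and> D2 n v = 0 \<and> D3 n v = 0 \<and>
     E1 n v = sc (of_nat m1) v \<and> E2 n v = sc (of_nat m2) v"

text \<open>V is (isomorphic to) Gamma_{m1,m2}: a finite-dimensional irreducible sl3-module
  generated by a highest vector of weight [m1,m2] (in an irreducible module every nonzero
  vector generates it).\<close>
definition is_Gamma :: "nat \<Rightarrow> nat \<Rightarrow> nat \<Rightarrow> 'k::comm_ring_1 pol set \<Rightarrow> bool" where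
  "is_Gamma n m1 m2 V \<longleftrightarrow> (\<exists>B. finite B \<and> V = kspan B) \<and> irreducible_sl3_submodule n V \<and>
     (\<exists>v \<in> V. highest_vector n m1 m2 v)"

end

theory Submission
  imports Defs
begin

text \<open>Write f = \<Sum> C(a,b,e) u1^a u2^b u3^e over the triples a + b + e = d. Each of the eight
  operators is a derivation preserving K[A] that sends the u-monomial with exponent t to \<kappa>(t) times
  the one with exponent \<sigma>(t). As the u-monomials are linearly independent over K[A], D f = 0 forces
  D C(s) = - \<Sum>{\<kappa>(t) C(t) | \<sigma>(t) = s}. Hence C_d is stable, c_00 = C(0,0,d) is killed by D1, D2,
  D3 and has weight [0,d], and Dh3, Dh2 carry c_00 to C(i,j,d-i-j) up to the factor
  (-1)^(i+j) i! j!, which gives (iii). Conversely D2 and D3 move C(a,b,e) towards C(0,0,d) with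
  nonzero factors: if (i,j,k) has the least k in the support of a nonzero w in C_d, then
  D3^i D2^j w is a nonzero multiple of c_00. So every nonzero submodule of C_d contains c_00, and
  C_d is irreducible.\<close>

abbreviation lk where "lk \<equiv> Poly_Mapping.lookup"
abbreviation sg where "sg \<equiv> Poly_Mapping.single"

lemma poly_mapping_sum_single:
  "(p::'a \<Rightarrow>\<^sub>0 'b::comm_monoid_add) = (\<Sum>m\<in>Poly_Mapping.keys p. sg m (lk p m))"
  by (rule poly_mapping_eqI) (simp add: lookup_sum lookup_single when_def in_keys_iff sum.delta)

lemma poly_mapping_induct_single[case_names zero single]:
  assumes "P 0" "\<And>f a b. P f \<Longrightarrow> P (sg a b + f)"
  shows "P (p::'a \<Rightarrow>\<^sub>0 'b::comm_monoid_add)"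
proof -
  have "P (\<Sum>m\<in>K. sg m (lk p m))" if "finite K" for K
    using that by (induction K rule: finite_induct) (auto simp: assms)
  then show ?thesis using poly_mapping_sum_single[of p] by (metis finite_keys)
qed

subsection \<open>Partial derivatives and derivations\<close>

lemma lookup_pderiv_var:
  "lk (pderiv_var v p) x = of_nat (lk x v + 1) * lk p (x + sg v 1)"
proof -
  have shift: "(of_nat (lk m v) * lk p m when Poly_Mapping.update v (lk m v - 1) m = x)
        = (if m = x + sg v 1 then of_nat (lk x v + 1) * lk p m else 0)" for m
  proof (cases "lk m v = 0")
    case True
    then have "m \<noteq> x + sg v 1"
      by (metis add_eq_0_iff_both_eq_0 lookup_add lookup_single_eq one_neq_zero)
    with True show ?thesis by (simp add: when_def)
  next
    case False
    have "Poly_Mapping.update v (lk m v - 1) m = x \<longleftrightarrow> m = x + sg v 1"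
    proof
      assume h: "Poly_Mapping.update v (lk m v - 1) m = x"
      show "m = x + sg v 1"
      proof (rule poly_mapping_eqI)
        fix k
        show "lk m k = lk (x + sg v 1) k"
          using False arg_cong[OF h, of "\<lambda>q. lk q k"]
          by (auto simp: lookup_update lookup_add lookup_single when_def split: if_splits)
      qed
    qed (rule poly_mapping_eqI, auto simp: lookup_update lookup_add lookup_single when_def)
    then show ?thesis by (auto simp: when_def lookup_add)
  qed
  show ?thesis
    unfolding pderiv_var_def lookup_sum lookup_single shift
    by (simp add: sum.delta in_keys_iff)
qed

lemma pderiv_var_add: "pderiv_var v (p + q) = pderiv_var v p + pderiv_var v q"
  by (rule poly_mapping_eqI) (simp add: lookup_pderiv_var lookup_add distrib_left)

lemma pderiv_var_zero[simp]: "pderiv_var v 0 = 0"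
  by (simp add: pderiv_var_def)

lemma pderiv_var_single:
  "pderiv_var v (sg a (c::'k::comm_ring_1)) = sg (Poly_Mapping.update v (lk a v - 1) a) (of_nat (lk a v) * c)"
  by (cases "c = 0") (simp_all add: pderiv_var_def)

lemma pderiv_var_single_mult_single:
  "pderiv_var v (sg a b) * sg a' b'
   = sg (Poly_Mapping.update v (lk (a + a') v - 1) (a + a')) (of_nat (lk a v) * (b * (b'::'k::comm_ring_1)))"
proof (cases "lk a v = 0")
  case False
  have "Poly_Mapping.update v (lk a v - 1) a + a' = Poly_Mapping.update v (lk (a + a') v - 1) (a + a')"
    by (rule poly_mapping_eqI) (use False in \<open>auto simp: lookup_update lookup_add\<close>)
  then show ?thesis by (simp add: pderiv_var_single mult_single mult.assoc)
qed (simp add: pderiv_var_single)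

lemma pderiv_var_mult_single:
  "pderiv_var v (sg a b * sg a' b')
   = pderiv_var v (sg a b) * sg a' b' + sg a (b::'k::comm_ring_1) * pderiv_var v (sg a' b')"
proof -
  have "sg a b * pderiv_var v (sg a' b')
      = sg (Poly_Mapping.update v (lk (a + a') v - 1) (a + a')) (of_nat (lk a' v) * (b * b'))"
    using pderiv_var_single_mult_single[of v a' b' a b] by (simp add: mult.commute add.commute)
  then show ?thesis
    unfolding pderiv_var_single_mult_single
    by (simp add: pderiv_var_single mult_single lookup_add single_add[symmetric] distrib_right)
qed

lemma pderiv_var_mult:
  "pderiv_var v (p * q) = pderiv_var v p * q + p * pderiv_var v (q :: 'k::comm_ring_1 pol)"
proof (induction p rule: poly_mapping_induct_single)
  case (single f a b)
  have "pderiv_var v (sg a b * q) = pderiv_var v (sg a b) * q + sg a b * pderiv_var v q"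
    by (induction q rule: poly_mapping_induct_single)
      (simp_all add: distrib_left distrib_right pderiv_var_add pderiv_var_mult_single)
  with single show ?case by (simp add: distrib_left distrib_right pderiv_var_add)
qed simp

lemma finite_vars[simp]: "finite (vars p)"
  by (simp add: vars_def)

lemma vars_zero[simp]: "vars 0 = {}"
  by (simp add: vars_def)

lemma vars_add: "vars (p + q) \<subseteq> vars p \<union> vars q"
  unfolding vars_def using keys_add[of p q] by blast

lemma vars_mult: "vars ((p::'k::comm_ring_1 pol) * q) \<subseteq> vars p \<union> vars q"
proof
  fix x assume "x \<in> vars (p * q)"
  then obtain m where m: "m \<in> Poly_Mapping.keys (p * q)" "x \<in> Poly_Mapping.keys m"
    by (auto simp: vars_def)
  then obtain a b where "m = a + b" "a \<in> Poly_Mapping.keys p" "b \<in> Poly_Mapping.keys q"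
    using keys_mult[of p q] by blast
  with m keys_add[of a b] show "x \<in> vars p \<union> vars q" by (auto simp: vars_def)
qed

lemma vars_sum: "vars (sum g A) \<subseteq> (\<Union>a\<in>A. vars (g a))"
  unfolding vars_def using keys_sum[of g A] by blast

lemma vars_single: "vars (sg m c) \<subseteq> Poly_Mapping.keys m"
  by (auto simp: vars_def split: if_splits)

lemma vars_Var: "vars (Var v :: 'k::comm_ring_1 pol) \<subseteq> {v}"
  using vars_single[of "sg v 1" "1::'k"] by (simp add: Var_def)

lemma vars_pderiv_var: "vars (pderiv_var v p) \<subseteq> vars p"
proof -
  have "vars (sg (Poly_Mapping.update v (lk m v - 1) m) (of_nat (lk m v) * lk p m))
      \<subseteq> Poly_Mapping.keys m" for m
  proof (cases "lk m v = 0")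
    case False
    then have "Poly_Mapping.keys (Poly_Mapping.update v (lk m v - 1) m) \<subseteq> Poly_Mapping.keys m"
      by (auto simp: keys_update in_keys_iff)
    then show ?thesis using vars_single by blast
  qed simp
  then have "vars (sg (Poly_Mapping.update v (lk m v - 1) m) (of_nat (lk m v) * lk p m)) \<subseteq> vars p"
    if "m \<in> Poly_Mapping.keys p" for m
    using that unfolding vars_def by blast
  then show ?thesis
    unfolding pderiv_var_def by (intro order.trans[OF vars_sum] UN_least)
qed

lemma pderiv_var_notin_vars: "v \<notin> vars p \<Longrightarrow> pderiv_var v p = 0"
  unfolding pderiv_var_def by (rule sum.neutral) (auto simp: vars_def in_keys_iff)

lemma der_eq_sum_superset:
  assumes "finite S" "vars p \<subseteq> S"
  shows "der \<delta> p = (\<Sum>v\<in>S. pderiv_var v p * \<delta> v)"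
  unfolding der_def
  by (rule sum.mono_neutral_left) (use assms in \<open>auto simp: pderiv_var_notin_vars\<close>)

lemma der_zero[simp]: "der \<delta> 0 = 0"
  by (simp add: der_def)

lemma der_add: "der \<delta> (p + q) = der \<delta> p + der \<delta> q"
proof -
  let ?S = "vars p \<union> vars q"
  have "der \<delta> (p + q) = (\<Sum>v\<in>?S. pderiv_var v (p + q) * \<delta> v)"
    by (rule der_eq_sum_superset) (use vars_add in auto)
  then show ?thesis
    using der_eq_sum_superset[of ?S p \<delta>] der_eq_sum_superset[of ?S q \<delta>]
    by (simp add: pderiv_var_add distrib_right sum.distrib)
qed

lemma der_mult: "der \<delta> (p * q) = der \<delta> p * q + p * der \<delta> (q::'k::comm_ring_1 pol)"
proof -
  let ?S = "vars p \<union> vars q"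
  have "der \<delta> (p * q) = (\<Sum>v\<in>?S. pderiv_var v (p * q) * \<delta> v)"
    by (rule der_eq_sum_superset) (use vars_mult in auto)
  also have "\<dots> = (\<Sum>v\<in>?S. pderiv_var v p * \<delta> v) * q + p * (\<Sum>v\<in>?S. pderiv_var v q * \<delta> v)"
    by (simp add: pderiv_var_mult algebra_simps sum.distrib sum_distrib_left sum_distrib_right)
  finally show ?thesis
    using der_eq_sum_superset[of ?S p \<delta>] der_eq_sum_superset[of ?S q \<delta>] by simp
qed

lemma der_sum: "der \<delta> (sum g A) = (\<Sum>a\<in>A. der \<delta> (g a))"
  by (induction A rule: infinite_finite_induct) (simp_all add: der_add)

lemma der_const[simp]: "der \<delta> (const c) = 0"
  by (simp add: der_def const_def vars_def)

lemma der_sc: "der \<delta> (sc c p) = sc c (der \<delta> p)"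
  by (simp add: sc_def der_mult)

lemma der_Var: "der \<delta> (Var v :: 'k::comm_ring_1 pol) = \<delta> v"
proof -
  have "Poly_Mapping.update v 0 (sg v 1) = (0 :: var \<Rightarrow>\<^sub>0 nat)"
    by (rule poly_mapping_eqI) (simp add: lookup_update lookup_single when_def)
  then have "pderiv_var v (Var v :: 'k pol) = 1"
    by (simp add: Var_def pderiv_var_single)
  moreover have "der \<delta> (Var v :: 'k pol) = (\<Sum>w\<in>{v}. pderiv_var w (Var v :: 'k pol) * \<delta> w)"
    by (rule der_eq_sum_superset) (use vars_Var in auto)
  ultimately show ?thesis by simp
qed

lemma der_power: "der \<delta> (p ^ k) = of_nat k * p ^ (k - 1) * der \<delta> (p::'k::comm_ring_1 pol)"
proof (induction k)
  case (Suc k)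
  then show ?case by (cases k) (simp_all add: der_mult algebra_simps)
qed (use der_const[of \<delta> 1] in \<open>simp add: const_def\<close>)

lemma der_funpow_zero: "(der \<delta> ^^ k) 0 = 0"
  by (induction k) auto

lemma der_funpow_sc: "(der \<delta> ^^ k) (sc c p) = sc c ((der \<delta> ^^ k) p)"
  by (induction k) (auto simp: der_sc)

lemma der_funpow_sum: "(der \<delta> ^^ k) (sum g A) = (\<Sum>a\<in>A. (der \<delta> ^^ k) (g a))"
proof (induction k)
  case (Suc k)
  then show ?case by (simp add: der_sum)
qed simp

lemma KA_iff: "p \<in> KA n \<longleftrightarrow> vars p \<subseteq> Avars n"
  by (simp add: KA_def)

lemma KA_zero[simp]: "0 \<in> KA n"
  by (simp add: KA_iff)

lemma KA_add: "p \<in> KA n \<Longrightarrow> q \<in> KA n \<Longrightarrow> p + q \<in> KA n"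
  using vars_add[of p q] by (auto simp: KA_iff)

lemma KA_uminus: "p \<in> KA n \<Longrightarrow> - (p::'k::comm_ring_1 pol) \<in> KA n"
  by (simp add: KA_iff vars_def)

lemma KA_diff: "p \<in> KA n \<Longrightarrow> q \<in> KA n \<Longrightarrow> (p::'k::comm_ring_1 pol) - q \<in> KA n"
  using KA_add[OF _ KA_uminus] by fastforce

lemma KA_mult: "p \<in> KA n \<Longrightarrow> q \<in> KA n \<Longrightarrow> (p::'k::comm_ring_1 pol) * q \<in> KA n"
  using vars_mult[of p q] by (auto simp: KA_iff)

lemma KA_sum: "(\<And>a. a \<in> A \<Longrightarrow> g a \<in> KA n) \<Longrightarrow> sum g A \<in> KA n"
  by (induction A rule: infinite_finite_induct) (auto intro: KA_add)

lemma KA_const[simp]: "const c \<in> KA n"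
  using vars_single[of 0 c] by (simp add: KA_iff const_def)

lemma KA_of_int[simp]: "(of_int k :: 'k::comm_ring_1 pol) \<in> KA n"
  using KA_const[of "of_int k" n] by (simp add: const_def)

lemma KA_of_nat[simp]: "(of_nat k :: 'k::comm_ring_1 pol) \<in> KA n"
  using KA_of_int[of "int k" n] by simp

lemma KA_numeral[simp]: "(numeral k :: 'k::comm_ring_1 pol) \<in> KA n"
  using KA_of_nat[of "numeral k" n] by simp

lemma KA_sc: "p \<in> KA n \<Longrightarrow> sc c p \<in> KA n"
  by (simp add: sc_def KA_mult)

lemma KA_acoef[simp]: "acoef n i j \<in> KA n"
  using vars_Var[of "Av i j"] by (auto simp: acoef_def KA_iff Avars_def)

lemma der_in_KA:
  assumes "\<forall>v\<in>Avars n. \<delta> v \<in> KA n" "p \<in> KA n"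
  shows "der \<delta> p \<in> KA n"
  unfolding der_def
proof (rule KA_sum)
  fix v assume "v \<in> vars p"
  then have "v \<in> Avars n" using assms(2) by (auto simp: KA_iff)
  moreover have "pderiv_var v p \<in> KA n"
    using assms(2) vars_pderiv_var[of v p] by (simp add: KA_iff)
  ultimately show "pderiv_var v p * \<delta> v \<in> KA n"
    using assms(1) by (simp add: KA_mult)
qed

lemma sl3_generators_in_KA:
  "\<forall>v\<in>Avars n. gD1 n v \<in> KA n" "\<forall>v\<in>Avars n. gD2 n v \<in> KA n" "\<forall>v\<in>Avars n. gD3 n v \<in> KA n"
  "\<forall>v\<in>Avars n. gDh1 n v \<in> KA n" "\<forall>v\<in>Avars n. gDh2 n v \<in> KA n" "\<forall>v\<in>Avars n. gDh3 n v \<in> KA n"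
  "\<forall>v\<in>Avars n. gE1 n v \<in> KA n" "\<forall>v\<in>Avars n. gE2 n v \<in> KA n"
  by (auto simp: Avars_def gD1_def gD2_def gD3_def gDh1_def gDh2_def gDh3_def gE1_def gE2_def
      intro!: KA_mult KA_add KA_diff)

lemma const_mult: "const a * const b = const (a * b)"
  by (simp add: const_def mult_single)

lemma sc_sc[simp]: "sc a (sc b p) = sc (a * b) p"
  by (simp add: sc_def const_mult mult.assoc[symmetric])

lemma sc_add_left: "sc (a + b) p = sc a p + sc b p"
  by (simp add: sc_def const_def single_add distrib_right)

lemma sc_zero_left[simp]: "sc 0 p = 0"
  by (simp add: sc_def const_def)

lemma sc_zero_right[simp]: "sc a 0 = 0"
  by (simp add: sc_def)

lemma sc_one[simp]: "sc 1 p = p"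
  by (simp add: sc_def const_def)

lemma sc_mult_left: "sc a p * q = sc a (p * q)"
  by (simp add: sc_def mult.assoc)

lemma sc_mult_right: "p * sc a q = sc a (p * q)"
  by (simp add: sc_def mult_ac)

lemma sc_sum: "sc a (sum g A) = (\<Sum>x\<in>A. sc a (g x))"
  by (simp add: sc_def sum_distrib_left)

lemma sc_neg: "sc (- a) p = - sc a p"
  by (simp add: sc_def const_def single_uminus)

lemma sc_of_nat: "sc (of_nat k) p = of_nat k * p"
  by (simp add: sc_def const_def)

lemma sc_of_int: "sc (of_int k) p = of_int k * p"
  by (simp add: sc_def const_def)

subsection \<open>Monomials in the u-variables\<close>

definition umonom :: "nat \<times> nat \<times> nat \<Rightarrow> 'k::comm_ring_1 pol" where
  "umonom t = (case t of (a, b, c) \<Rightarrow> uu 1 ^ a * uu 2 ^ b * uu 3 ^ c)"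

definition uexp :: "nat \<times> nat \<times> nat \<Rightarrow> var \<Rightarrow>\<^sub>0 nat" where
  "uexp t = (case t of (a, b, c) \<Rightarrow> sg (U 1) a + sg (U 2) b + sg (U 3) c)"

lemma der_umonom:
  "der \<delta> (umonom (a, b, c)) =
     of_nat a * uu 1 ^ (a - 1) * uu 2 ^ b * uu 3 ^ c * \<delta> (U 1)
   + of_nat b * uu 1 ^ a * uu 2 ^ (b - 1) * uu 3 ^ c * \<delta> (U 2)
   + of_nat c * uu 1 ^ a * uu 2 ^ b * uu 3 ^ (c - 1) * \<delta> (U 3)"
  by (simp add: umonom_def der_mult der_power uu_def der_Var algebra_simps)

lemma of_nat_mult_power_pred: "of_nat a * (p::'k::comm_ring_1 pol) ^ (a - 1) * p = of_nat a * p ^ a"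
  by (cases a) (simp_all add: mult_ac)

lemma D1_umonom: "D1 n (umonom (a, b, c)) = sc (of_nat b) (umonom (a + 1, b - 1, c))"
  unfolding D1_def der_umonom
  by (cases b) (simp_all add: gD1_def umonom_def sc_of_nat mult_ac del: of_nat_Suc)

lemma D2_umonom: "D2 n (umonom (a, b, c)) = sc (of_nat c) (umonom (a, b + 1, c - 1))"
  unfolding D2_def der_umonom
  by (cases c) (simp_all add: gD2_def umonom_def sc_of_nat mult_ac del: of_nat_Suc)

lemma D3_umonom: "D3 n (umonom (a, b, c)) = sc (of_nat c) (umonom (a + 1, b, c - 1))"
  unfolding D3_def der_umonom
  by (cases c) (simp_all add: gD3_def umonom_def sc_of_nat mult_ac del: of_nat_Suc)

lemma Dh1_umonom: "Dh1 n (umonom (a, b, c)) = sc (of_nat a) (umonom (a - 1, b + 1, c))"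
  unfolding Dh1_def der_umonom
  by (cases a) (simp_all add: gDh1_def umonom_def sc_of_nat mult_ac del: of_nat_Suc)

lemma Dh2_umonom: "Dh2 n (umonom (a, b, c)) = sc (of_nat b) (umonom (a, b - 1, c + 1))"
  unfolding Dh2_def der_umonom
  by (cases b) (simp_all add: gDh2_def umonom_def sc_of_nat mult_ac del: of_nat_Suc)

lemma Dh3_umonom: "Dh3 n (umonom (a, b, c)) = sc (of_nat a) (umonom (a - 1, b, c + 1))"
  unfolding Dh3_def der_umonom
  by (cases a) (simp_all add: gDh3_def umonom_def sc_of_nat mult_ac del: of_nat_Suc)

lemma E1_umonom: "E1 n (umonom (a, b, c)) = sc (of_int (int a - int b)) (umonom (a, b, c))"
proof -
  have "E1 n (umonom (a, b, c)) = of_nat a * uu 1 ^ (a - 1) * uu 1 * uu 2 ^ b * uu 3 ^ c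
       - of_nat b * uu 2 ^ (b - 1) * uu 2 * uu 1 ^ a * uu 3 ^ c"
    by (simp add: E1_def der_umonom gE1_def algebra_simps)
  also have "\<dots> = of_int (int a - int b) * umonom (a, b, c)"
    by (simp only: of_nat_mult_power_pred) (simp add: umonom_def algebra_simps)
  finally show ?thesis
    by (simp only: sc_of_int)
qed

lemma E2_umonom: "E2 n (umonom (a, b, c)) = sc (of_int (int b - int c)) (umonom (a, b, c))"
proof -
  have "E2 n (umonom (a, b, c)) = of_nat b * uu 2 ^ (b - 1) * uu 2 * uu 1 ^ a * uu 3 ^ c
       - of_nat c * uu 3 ^ (c - 1) * uu 3 * uu 1 ^ a * uu 2 ^ b"
    by (simp add: E2_def der_umonom gE2_def algebra_simps)
  also have "\<dots> = of_int (int b - int c) * umonom (a, b, c)"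
    by (simp only: of_nat_mult_power_pred) (simp add: umonom_def algebra_simps)
  finally show ?thesis
    by (simp only: sc_of_int)
qed

lemma umonom_eq_single: "(umonom t :: 'k::comm_ring_1 pol) = sg (uexp t) 1"
proof -
  have "(Var v :: 'k pol) ^ k = sg (sg v k) 1" for v k
    by (induction k) (simp_all add: Var_def mult_single single_add[symmetric])
  then show ?thesis
    by (cases t) (simp add: umonom_def uexp_def uu_def mult_single)
qed

lemma keys_KA: "p \<in> KA n \<Longrightarrow> m \<in> Poly_Mapping.keys p \<Longrightarrow> Poly_Mapping.keys m \<subseteq> Avars n"
  by (auto simp: KA_iff vars_def)

lemma add_uexp_eq_iff:
  assumes "Poly_Mapping.keys m \<subseteq> Avars n" "Poly_Mapping.keys m' \<subseteq> Avars n"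
  shows "m + uexp t = m' + uexp s \<longleftrightarrow> m = m' \<and> t = s"
proof
  assume h: "m + uexp t = m' + uexp s"
  have U0: "lk m (U k) = 0" "lk m' (U k) = 0" for k
    using assms by (auto simp: Avars_def in_keys_iff)
  obtain a b c a' b' c' where ts: "t = (a, b, c)" "s = (a', b', c')"
    by (cases t, cases s) auto
  have "lk (m + uexp t) (U k) = lk (m' + uexp s) (U k)" for k
    using h by simp
  from this[of 1] this[of 2] this[of 3] have "t = s"
    by (simp add: ts U0 uexp_def lookup_add lookup_single)
  with h show "m = m' \<and> t = s" by simp
qed simp

lemma lookup_KA_mult_umonom:
  assumes "p \<in> KA n" "Poly_Mapping.keys m \<subseteq> Avars n"
  shows "lk (p * umonom t) (m + uexp s) = (if t = s then lk p m else (0::'k::comm_ring_1))"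
proof -
  have "p * umonom t = (\<Sum>m'\<in>Poly_Mapping.keys p. sg (m' + uexp t) (lk p m'))"
    by (subst poly_mapping_sum_single[of p])
      (simp add: umonom_eq_single sum_distrib_right mult_single)
  then have "lk (p * umonom t) (m + uexp s)
      = (\<Sum>m'\<in>Poly_Mapping.keys p. if m' = m \<and> t = s then lk p m' else 0)"
    using add_uexp_eq_iff[OF keys_KA[OF assms(1)] assms(2)]
    by (auto simp: lookup_sum lookup_single when_def intro!: sum.cong)
  then show ?thesis
    by (simp add: sum.delta' in_keys_iff)
qed

lemma KA_umonom_independent:
  fixes P :: "nat \<times> nat \<times> nat \<Rightarrow> 'k::comm_ring_1 pol"
  assumes "finite S" "\<And>t. t \<in> S \<Longrightarrow> P t \<in> KA n" "(\<Sum>t\<in>S. P t * umonom t) = 0" "s \<in> S"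
  shows "P s = 0"
proof (rule poly_mapping_eqI)
  fix m
  show "lk (P s) m = lk 0 m"
  proof (cases "Poly_Mapping.keys m \<subseteq> Avars n")
    case True
    have "0 = lk (\<Sum>t\<in>S. P t * umonom t) (m + uexp s)"
      using assms(3) by simp
    also have "\<dots> = (\<Sum>t\<in>S. if t = s then lk (P t) m else 0)"
      unfolding lookup_sum using lookup_KA_mult_umonom[OF assms(2) True] by simp
    also have "\<dots> = lk (P s) m"
      using assms(1,4) by simp
    finally show ?thesis by simp
  next
    case False
    then show ?thesis
      using keys_KA[OF assms(2)[OF assms(4)]] by (auto simp: in_keys_iff)
  qed
qed

lemma sum_fibres_mult:
  fixes g :: "'b \<Rightarrow> 'a::semiring_0" and h :: "'c \<Rightarrow> 'a"
  assumes "finite T" "finite S" "\<sigma> ` T \<subseteq> S"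
  shows "(\<Sum>s\<in>S. (\<Sum>t\<in>{t\<in>T. \<sigma> t = s}. g t) * h s) = (\<Sum>t\<in>T. g t * h (\<sigma> t))"
proof -
  have "(\<Sum>s\<in>S. (\<Sum>t\<in>{t\<in>T. \<sigma> t = s}. g t) * h s)
      = (\<Sum>s\<in>S. \<Sum>t\<in>{t\<in>T. \<sigma> t = s}. g t * h (\<sigma> t))"
    by (simp add: sum_distrib_right)
  also have "\<dots> = (\<Sum>t\<in>T. g t * h (\<sigma> t))"
    by (rule sum.group[OF assms])
  finally show ?thesis .
qed

lemma der_coeff_relation:
  fixes C :: "nat \<times> nat \<times> nat \<Rightarrow> 'k::comm_ring_1 pol"
  assumes fin: "finite T" and C_KA: "\<And>t. t \<in> T \<Longrightarrow> C t \<in> KA n"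
    and \<delta>_KA: "\<forall>v\<in>Avars n. \<delta> v \<in> KA n"
    and \<delta>_umonom: "\<And>t. der \<delta> (umonom t) = sc (\<kappa> t) (umonom (\<sigma> t))"
    and annihilated: "der \<delta> (\<Sum>t\<in>T. C t * umonom t) = 0" and "s \<in> T"
  shows "der \<delta> (C s) = - (\<Sum>t\<in>{t\<in>T. \<sigma> t = s}. sc (\<kappa> t) (C t))"
proof -
  define S where "S = T \<union> \<sigma> ` T"
  define Q where "Q s = (if s \<in> T then der \<delta> (C s) else 0)
    + (\<Sum>t\<in>{t\<in>T. \<sigma> t = s}. sc (\<kappa> t) (C t))" for s
  have fin_S: "finite S" and "T \<subseteq> S" "\<sigma> ` T \<subseteq> S"
    using fin by (auto simp: S_def)
  have "(\<Sum>s\<in>S. (if s \<in> T then der \<delta> (C s) else 0) * umonom s) = (\<Sum>s\<in>T. der \<delta> (C s) * umonom s)"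
    using fin_S \<open>T \<subseteq> S\<close> by (intro sum.mono_neutral_cong_right) auto
  moreover have "(\<Sum>s\<in>S. (\<Sum>t\<in>{t\<in>T. \<sigma> t = s}. sc (\<kappa> t) (C t)) * umonom s)
      = (\<Sum>t\<in>T. sc (\<kappa> t) (C t) * umonom (\<sigma> t))"
    by (rule sum_fibres_mult[OF fin fin_S \<open>\<sigma> ` T \<subseteq> S\<close>])
  ultimately have "(\<Sum>s\<in>S. Q s * umonom s) = der \<delta> (\<Sum>t\<in>T. C t * umonom t)"
    by (simp add: Q_def distrib_right sum.distrib der_sum der_mult \<delta>_umonom sc_mult_left
        sc_mult_right add.commute)
  also have "\<dots> = 0"
    by (rule annihilated)
  finally have "(\<Sum>s\<in>S. Q s * umonom s) = 0" .
  moreover have "Q s' \<in> KA n" for s'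
    using C_KA der_in_KA[OF \<delta>_KA C_KA] unfolding Q_def by (intro KA_add KA_sum KA_sc) auto
  ultimately have "Q s = 0"
    using KA_umonom_independent[OF fin_S] \<open>s \<in> T\<close> \<open>T \<subseteq> S\<close> by blast
  then show ?thesis
    using \<open>s \<in> T\<close> by (simp add: Q_def eq_neg_iff_add_eq_0)
qed

lemma sl3_op_monomial_derivation:
  assumes "D \<in> sl3_ops n"
  shows "\<exists>\<delta> \<kappa> \<sigma>. D = der \<delta> \<and> (\<forall>v\<in>Avars n. \<delta> v \<in> KA n)
    \<and> (\<forall>t. der \<delta> (umonom t) = sc (\<kappa> t) (umonom (\<sigma> t)))"
proof -
  have witness: "\<exists>\<delta> \<kappa> \<sigma>. D' = der \<delta> \<and> (\<forall>v\<in>Avars n. \<delta> v \<in> KA n)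
      \<and> (\<forall>t. der \<delta> (umonom t) = sc (\<kappa> t) (umonom (\<sigma> t)))"
    if "D' = der \<delta>" "\<forall>v\<in>Avars n. \<delta> v \<in> KA n"
      "\<And>a b c. der \<delta> (umonom (a, b, c)) = sc (\<kappa> a b c) (umonom (\<sigma> a b c))"
    for D' :: "'a::comm_ring_1 pol \<Rightarrow> 'a pol" and \<delta> \<kappa> \<sigma>
    using that by (intro exI[of _ \<delta>] exI[of _ "\<lambda>(a, b, c). \<kappa> a b c"]
        exI[of _ "\<lambda>(a, b, c). \<sigma> a b c"]) auto
  note defs = D1_def D2_def D3_def Dh1_def Dh2_def Dh3_def E1_def E2_def
  note umonom_actions = D1_umonom D2_umonom D3_umonom Dh1_umonom Dh2_umonom Dh3_umonom
    E1_umonom E2_umonom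
  from assms show ?thesis
    unfolding sl3_ops_def
    by (elim insertE emptyE) (hypsubst, rule witness, rule defs, rule sl3_generators_in_KA,
        rule umonom_actions[unfolded defs])+
qed

lemma subspace_sc: "subspace_pol W \<Longrightarrow> p \<in> W \<Longrightarrow> sc a p \<in> W"
  by (simp add: subspace_pol_def)

lemma subspace_sum: "subspace_pol W \<Longrightarrow> (\<And>a. a \<in> A \<Longrightarrow> g a \<in> W) \<Longrightarrow> sum g A \<in> W"
  by (induction A rule: infinite_finite_induct) (auto simp: subspace_pol_def)

lemma subspace_uminus: "subspace_pol W \<Longrightarrow> p \<in> W \<Longrightarrow> - (p::'k::comm_ring_1 pol) \<in> W"
  using subspace_sc[of W p "-1"] by (simp add: sc_neg)

lemma funpow_closed: "(\<And>p. p \<in> W \<Longrightarrow> D p \<in> W) \<Longrightarrow> p \<in> W \<Longrightarrow> (D ^^ k) p \<in> W"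
  by (induction k) auto

lemma kspan_superset: "S \<subseteq> kspan S"
proof
  fix q assume "q \<in> S"
  then show "q \<in> kspan S"
    unfolding kspan_def by (intro CollectI exI[of _ "{q}"] exI[of _ "\<lambda>_. 1"]) auto
qed

lemma kspan_least:
  assumes "subspace_pol W" "S \<subseteq> W"
  shows "kspan S \<subseteq> W"
  using assms by (auto simp: kspan_def intro!: subspace_sum subspace_sc)

lemma subspace_kspan: "subspace_pol (kspan (S :: 'k::comm_ring_1 pol set))"
  unfolding subspace_pol_def
proof (intro conjI ballI allI)
  show "0 \<in> kspan S"
    unfolding kspan_def by (intro CollectI exI[of _ "{}"]) auto
next
  fix p q assume "p \<in> kspan S" "q \<in> kspan S"
  then obtain F1 l1 F2 l2 where F: "finite F1" "F1 \<subseteq> S" "p = (\<Sum>x\<in>F1. sc (l1 x) x)"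
    "finite F2" "F2 \<subseteq> S" "q = (\<Sum>x\<in>F2. sc (l2 x) x)"
    by (auto simp: kspan_def)
  define l where "l x = (if x \<in> F1 then l1 x else 0) + (if x \<in> F2 then l2 x else 0)" for x
  have "(\<Sum>x\<in>F1 \<union> F2. sc (if x \<in> F1 then l1 x else 0) x) = p"
    and "(\<Sum>x\<in>F1 \<union> F2. sc (if x \<in> F2 then l2 x else 0) x) = q"
    unfolding F(3,6) by (rule sum.mono_neutral_cong_right; use F in auto)+
  then have "p + q = (\<Sum>x\<in>F1 \<union> F2. sc (l x) x)"
    by (simp add: l_def sc_add_left sum.distrib)
  then show "p + q \<in> kspan S"
    unfolding kspan_def using F by (intro CollectI exI[of _ "F1 \<union> F2"] exI[of _ l]) auto
next
  fix a p assume "p \<in> kspan S"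
  then obtain F l where F: "finite F" "F \<subseteq> S" "p = (\<Sum>x\<in>F. sc (l x) x)"
    by (auto simp: kspan_def)
  then have "sc a p = (\<Sum>x\<in>F. sc (a * l x) x)"
    by (simp add: sc_sum)
  then show "sc a p \<in> kspan S"
    unfolding kspan_def using F by (intro CollectI exI[of _ F] exI[of _ "\<lambda>x. a * l x"]) auto
qed

lemma subspace_linear_combinations: "subspace_pol {\<Sum>t\<in>T. sc (\<mu> t) (g t) | \<mu>. True}"
  unfolding subspace_pol_def
proof (intro conjI ballI allI)
  show "0 \<in> {\<Sum>t\<in>T. sc (\<mu> t) (g t) | \<mu>. True}"
    by (intro CollectI exI[of _ "\<lambda>_. 0"]) simp
next
  fix p q assume "p \<in> {\<Sum>t\<in>T. sc (\<mu> t) (g t) | \<mu>. True}" "q \<in> {\<Sum>t\<in>T. sc (\<mu> t) (g t) | \<mu>. True}"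
  then obtain \<mu>1 \<mu>2 where "p = (\<Sum>t\<in>T. sc (\<mu>1 t) (g t))" "q = (\<Sum>t\<in>T. sc (\<mu>2 t) (g t))"
    by blast
  then have "p + q = (\<Sum>t\<in>T. sc (\<mu>1 t + \<mu>2 t) (g t))"
    by (simp add: sc_add_left sum.distrib)
  then show "p + q \<in> {\<Sum>t\<in>T. sc (\<mu> t) (g t) | \<mu>. True}"
    by (intro CollectI exI[of _ "\<lambda>t. \<mu>1 t + \<mu>2 t"]) simp
next
  fix a p assume "p \<in> {\<Sum>t\<in>T. sc (\<mu> t) (g t) | \<mu>. True}"
  then obtain \<mu> where "p = (\<Sum>t\<in>T. sc (\<mu> t) (g t))"
    by blast
  then have "sc a p = (\<Sum>t\<in>T. sc (a * \<mu> t) (g t))"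
    by (simp add: sc_sum)
  then show "sc a p \<in> {\<Sum>t\<in>T. sc (\<mu> t) (g t) | \<mu>. True}"
    by (intro CollectI exI[of _ "\<lambda>t. a * \<mu> t"]) simp
qed

lemma subspace_KA: "subspace_pol (KA n)"
  by (auto simp: subspace_pol_def intro: KA_add KA_sc)

lemma der_kspan_closed:
  assumes "\<And>q. q \<in> S \<Longrightarrow> der \<delta> q \<in> kspan S" "p \<in> kspan S"
  shows "der \<delta> p \<in> kspan S"
proof -
  obtain F l where "finite F" "F \<subseteq> S" "p = (\<Sum>q\<in>F. sc (l q) q)"
    using assms(2) by (auto simp: kspan_def)
  then have "der \<delta> p = (\<Sum>q\<in>F. sc (l q) (der \<delta> q))"
    by (simp add: der_sum der_sc)
  also have "\<dots> \<in> kspan S"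
    using \<open>F \<subseteq> S\<close> assms(1) by (intro subspace_sum subspace_sc subspace_kspan) auto
  finally show ?thesis .
qed

lemma der_funpow_chain:
  assumes "\<And>i. i < k \<Longrightarrow> der \<delta> (g i) = sc (\<kappa> i) (g (Suc i))"
  shows "(der \<delta> ^^ k) (g 0) = sc (\<Prod>i<k. \<kappa> i) (g k)"
  using assms by (induction k) (simp_all add: der_sc mult.commute)

lemma der_funpow_chain_vanish:
  assumes "\<And>i. i < m \<Longrightarrow> der \<delta> (g i) = sc (\<kappa> i) (g (Suc i))" "der \<delta> (g m) = 0" "m < k"
  shows "(der \<delta> ^^ k) (g 0) = 0"
proof -
  have "(der \<delta> ^^ Suc m) (g 0) = 0"
    using der_funpow_chain[of m \<delta> g \<kappa>] assms(1,2) by (simp add: der_sc)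
  moreover have "k = (k - Suc m) + Suc m"
    using assms(3) by simp
  ultimately show ?thesis
    by (metis funpow_add comp_apply der_funpow_zero)
qed

lemma prod_neg_of_nat_Suc: "(\<Prod>i<k. - of_nat (Suc i) :: 'a::{comm_ring_1,semiring_char_0}) = (-1) ^ k * fact k"
  by (induction k) (simp_all add: algebra_simps)

subsection \<open>The coefficients of a contravariant\<close>

definition triples :: "nat \<Rightarrow> (nat \<times> nat \<times> nat) set" where
  "triples d = {(a, b, e). a + b + e = d}"

definition multinom :: "nat \<Rightarrow> nat \<Rightarrow> nat \<Rightarrow> 'k::field_char_0" where
  "multinom d a b = fact d / (fact a * fact b * fact (d - (a + b)))"

lemma finite_triples: "finite (triples d)"
proof -
  have "triples d \<subseteq> {..d} \<times> {..d} \<times> {..d}"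
    by (auto simp: triples_def)
  then show ?thesis
    by (rule finite_subset) auto
qed

locale contravariant_expansion =
  fixes n d :: nat and f :: "'k::field_char_0 pol" and c :: "nat \<Rightarrow> nat \<Rightarrow> 'k pol"
  assumes c_KA: "\<And>i j. i + j \<le> d \<Longrightarrow> c i j \<in> KA n"
    and f_eq: "f = (\<Sum>i\<le>d. \<Sum>j\<le>d - i.
                   sc (fact d / (fact i * fact j * fact (d - (i + j))))
                      (c i j * uu 3 ^ (d - (i + j)) * uu 1 ^ i * uu 2 ^ j))"
    and contravariant: "contravariant n d f"
begin

definition C :: "nat \<times> nat \<times> nat \<Rightarrow> 'k pol" where
  "C t = (case t of (a, b, e) \<Rightarrow> sc (multinom d a b) (c a b))"

abbreviation Cd :: "'k pol set" where
  "Cd \<equiv> kspan {c i j | i j. i + j \<le> d}"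

lemma c_eq_C: "i + j \<le> d \<Longrightarrow> c i j = sc (inverse (multinom d i j)) (C (i, j, e))"
  by (simp add: C_def multinom_def)

lemma c00_eq_C: "c 0 0 = C (0, 0, d)"
  by (simp add: C_def multinom_def)

lemma C_KA: "t \<in> triples d \<Longrightarrow> C t \<in> KA n"
  by (auto simp: triples_def C_def intro!: KA_sc c_KA)

lemma c_in_Cd: "i + j \<le> d \<Longrightarrow> c i j \<in> Cd"
  using kspan_superset[of "{c i j | i j. i + j \<le> d}"] by blast

lemma C_in_Cd:
  assumes "t \<in> triples d"
  shows "C t \<in> Cd"
proof -
  obtain a b e where "t = (a, b, e)" "a + b \<le> d"
    using assms by (cases t) (auto simp: triples_def)
  then show ?thesis
    by (simp add: C_def subspace_sc[OF subspace_kspan] c_in_Cd)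
qed

lemma f_eq_sum_umonom: "f = (\<Sum>t\<in>triples d. C t * umonom t)"
proof -
  have "f = (\<Sum>(i, j)\<in>Sigma {..d} (\<lambda>i. {..d - i}).
      sc (multinom d i j) (c i j * uu 3 ^ (d - (i + j)) * uu 1 ^ i * uu 2 ^ j))"
    unfolding f_eq multinom_def by (subst sum.Sigma) auto
  also have "\<dots> = (\<Sum>t\<in>triples d. C t * umonom t)"
    by (rule sum.reindex_bij_witness[where i = "\<lambda>(a, b, e). (a, b)"
          and j = "\<lambda>(a, b). (a, b, d - (a + b))"])
      (auto simp: triples_def C_def umonom_def sc_mult_left sc_mult_right mult_ac)
  finally show ?thesis .
qed

lemma sl3_op_annihilates_f: "D \<in> sl3_ops n \<Longrightarrow> D f = 0"
  using contravariant by (simp add: contravariant_def)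

lemma C_relation:
  assumes "\<forall>v\<in>Avars n. \<delta> v \<in> KA n" "\<And>t. der \<delta> (umonom t) = sc (\<kappa> t) (umonom (\<sigma> t))"
    "der \<delta> f = 0" "s \<in> triples d"
  shows "der \<delta> (C s) = - (\<Sum>t\<in>{t\<in>triples d. \<sigma> t = s}. sc (\<kappa> t) (C t))"
  using der_coeff_relation[OF finite_triples C_KA assms(1,2)] assms(3,4)
  by (simp add: f_eq_sum_umonom)

lemma C_relation_single:
  assumes "\<forall>v\<in>Avars n. \<delta> v \<in> KA n" "\<And>t. der \<delta> (umonom t) = sc (\<kappa> t) (umonom (\<sigma> t))"
    "der \<delta> f = 0" "s \<in> triples d"
    and unique: "\<And>t. t \<in> triples d \<Longrightarrow> \<sigma> t = s \<Longrightarrow> \<kappa> t \<noteq> 0 \<Longrightarrow> t = t0"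
  shows "der \<delta> (C s) = (if t0 \<in> triples d \<and> \<sigma> t0 = s then - sc (\<kappa> t0) (C t0) else 0)"
proof -
  have "(\<Sum>t\<in>{t\<in>triples d. \<sigma> t = s}. sc (\<kappa> t) (C t))
      = (\<Sum>t\<in>{t\<in>triples d. \<sigma> t = s} \<inter> {t0}. sc (\<kappa> t) (C t))"
    using finite_triples unique by (intro sum.mono_neutral_right) (auto, metis sc_zero_left)
  then show ?thesis
    using C_relation[OF assms(1-4)] by (auto simp: Int_absorb1)
qed

lemma D1_C:
  assumes "(a, b, e) \<in> triples d"
  shows "D1 n (C (a, b, e)) = (if a = 0 then 0 else - sc (of_nat (Suc b)) (C (a - 1, Suc b, e)))"
  unfolding D1_def
  by (rule C_relation_single[OF sl3_generators_in_KA(1) _ _ assms, of "\<lambda>(a, b, e). of_nat b"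
        "\<lambda>(a, b, e). (a + 1, b - 1, e)" "(a - 1, Suc b, e)", THEN trans])
    (use assms in \<open>auto simp: triples_def D1_umonom[unfolded D1_def]
      sl3_op_annihilates_f[unfolded sl3_ops_def D1_def]\<close>)

lemma D2_C:
  assumes "(a, b, e) \<in> triples d"
  shows "D2 n (C (a, b, e)) = (if b = 0 then 0 else - sc (of_nat (Suc e)) (C (a, b - 1, Suc e)))"
  unfolding D2_def
  by (rule C_relation_single[OF sl3_generators_in_KA(2) _ _ assms, of "\<lambda>(a, b, e). of_nat e"
        "\<lambda>(a, b, e). (a, b + 1, e - 1)" "(a, b - 1, Suc e)", THEN trans])
    (use assms in \<open>auto simp: triples_def D2_umonom[unfolded D2_def]
      sl3_op_annihilates_f[unfolded sl3_ops_def D2_def]\<close>)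

lemma D3_C:
  assumes "(a, b, e) \<in> triples d"
  shows "D3 n (C (a, b, e)) = (if a = 0 then 0 else - sc (of_nat (Suc e)) (C (a - 1, b, Suc e)))"
  unfolding D3_def
  by (rule C_relation_single[OF sl3_generators_in_KA(3) _ _ assms, of "\<lambda>(a, b, e). of_nat e"
        "\<lambda>(a, b, e). (a + 1, b, e - 1)" "(a - 1, b, Suc e)", THEN trans])
    (use assms in \<open>auto simp: triples_def D3_umonom[unfolded D3_def]
      sl3_op_annihilates_f[unfolded sl3_ops_def D3_def]\<close>)

lemma Dh2_C:
  assumes "(a, b, e) \<in> triples d"
  shows "Dh2 n (C (a, b, e)) = (if e = 0 then 0 else - sc (of_nat (Suc b)) (C (a, Suc b, e - 1)))"
  unfolding Dh2_def
  by (rule C_relation_single[OF sl3_generators_in_KA(5) _ _ assms, of "\<lambda>(a, b, e). of_nat b"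
        "\<lambda>(a, b, e). (a, b - 1, e + 1)" "(a, Suc b, e - 1)", THEN trans])
    (use assms in \<open>auto simp: triples_def Dh2_umonom[unfolded Dh2_def]
      sl3_op_annihilates_f[unfolded sl3_ops_def Dh2_def]\<close>)

lemma Dh3_C:
  assumes "(a, b, e) \<in> triples d"
  shows "Dh3 n (C (a, b, e)) = (if e = 0 then 0 else - sc (of_nat (Suc a)) (C (Suc a, b, e - 1)))"
  unfolding Dh3_def
  by (rule C_relation_single[OF sl3_generators_in_KA(6) _ _ assms, of "\<lambda>(a, b, e). of_nat a"
        "\<lambda>(a, b, e). (a - 1, b, e + 1)" "(Suc a, b, e - 1)", THEN trans])
    (use assms in \<open>auto simp: triples_def Dh3_umonom[unfolded Dh3_def]
      sl3_op_annihilates_f[unfolded sl3_ops_def Dh3_def]\<close>)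

lemma E1_C:
  assumes "(a, b, e) \<in> triples d"
  shows "E1 n (C (a, b, e)) = sc (of_nat b - of_nat a) (C (a, b, e))"
  unfolding E1_def
  by (rule C_relation_single[OF sl3_generators_in_KA(7) _ _ assms,
        of "\<lambda>(a, b, e). of_int (int a - int b)"
        "\<lambda>(a, b, e). (a, b, e)" "(a, b, e)", THEN trans])
    (use assms in \<open>auto simp: triples_def E1_umonom[unfolded E1_def]
      sl3_op_annihilates_f[unfolded sl3_ops_def E1_def]
      sc_neg[symmetric]\<close>)

lemma E2_C:
  assumes "(a, b, e) \<in> triples d"
  shows "E2 n (C (a, b, e)) = sc (of_nat e - of_nat b) (C (a, b, e))"
  unfolding E2_def
  by (rule C_relation_single[OF sl3_generators_in_KA(8) _ _ assms,
        of "\<lambda>(a, b, e). of_int (int b - int e)"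
        "\<lambda>(a, b, e). (a, b, e)" "(a, b, e)", THEN trans])
    (use assms in \<open>auto simp: triples_def E2_umonom[unfolded E2_def]
      sl3_op_annihilates_f[unfolded sl3_ops_def E2_def]
      sc_neg[symmetric]\<close>)

lemma Dh3_funpow_C00:
  assumes "i \<le> d"
  shows "(Dh3 n ^^ i) (C (0, 0, d)) = sc ((-1) ^ i * fact i) (C (i, 0, d - i))"
proof -
  have "(Dh3 n ^^ i) (C (0, 0, d)) = sc (\<Prod>k<i. - of_nat (Suc k)) (C (i, 0, d - i))"
    unfolding Dh3_def
    by (rule der_funpow_chain[where g = "\<lambda>k. C (k, 0, d - k)", simplified])
      (use assms in \<open>simp add: Dh3_C[unfolded Dh3_def] triples_def sc_neg[symmetric] Suc_diff_Suc\<close>)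
  then show ?thesis
    by (simp only: prod_neg_of_nat_Suc)
qed

lemma Dh2_funpow_C:
  assumes "i + j \<le> d"
  shows "(Dh2 n ^^ j) (C (i, 0, d - i)) = sc ((-1) ^ j * fact j) (C (i, j, d - (i + j)))"
proof -
  have "(Dh2 n ^^ j) (C (i, 0, d - i)) = sc (\<Prod>k<j. - of_nat (Suc k)) (C (i, j, d - (i + j)))"
    unfolding Dh2_def
    by (rule der_funpow_chain[where g = "\<lambda>k. C (i, k, d - (i + k))", simplified])
      (use assms in \<open>simp add: Dh2_C[unfolded Dh2_def] triples_def sc_neg[symmetric] Suc_diff_Suc\<close>)
  then show ?thesis
    by (simp only: prod_neg_of_nat_Suc)
qed

lemma D2_funpow_C:
  assumes "(a, b, e) \<in> triples d" "k \<le> b"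
  shows "(D2 n ^^ k) (C (a, b, e)) = sc (\<Prod>i<k. - of_nat (Suc (e + i))) (C (a, b - k, e + k))"
  unfolding D2_def
  by (rule der_funpow_chain[where g = "\<lambda>i. C (a, b - i, e + i)", simplified])
    (use assms in \<open>simp add: D2_C[unfolded D2_def] triples_def sc_neg[symmetric]\<close>)

lemma D2_funpow_C_vanish:
  assumes "(a, b, e) \<in> triples d" "b < k"
  shows "(D2 n ^^ k) (C (a, b, e)) = 0"
  unfolding D2_def
  by (rule der_funpow_chain_vanish[where g = "\<lambda>i. C (a, b - i, e + i)" and m = b
      and \<kappa> = "\<lambda>i. - of_nat (Suc (e + i))", simplified])
    (use assms in \<open>simp_all add: D2_C[unfolded D2_def] triples_def sc_neg[symmetric]\<close>)

lemma D3_funpow_C: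
  assumes "(a, b, e) \<in> triples d" "k \<le> a"
  shows "(D3 n ^^ k) (C (a, b, e)) = sc (\<Prod>i<k. - of_nat (Suc (e + i))) (C (a - k, b, e + k))"
  unfolding D3_def
  by (rule der_funpow_chain[where g = "\<lambda>i. C (a - i, b, e + i)", simplified])
    (use assms in \<open>simp add: D3_C[unfolded D3_def] triples_def sc_neg[symmetric]\<close>)

lemma D3_funpow_C_vanish:
  assumes "(a, b, e) \<in> triples d" "a < k"
  shows "(D3 n ^^ k) (C (a, b, e)) = 0"
  unfolding D3_def
  by (rule der_funpow_chain_vanish[where g = "\<lambda>i. C (a - i, b, e + i)" and m = a
      and \<kappa> = "\<lambda>i. - of_nat (Suc (e + i))", simplified])
    (use assms in \<open>simp_all add: D3_C[unfolded D3_def] triples_def sc_neg[symmetric]\<close>)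

lemma C_eq_Dh_funpow_c00:
  assumes "i + j \<le> d"
  shows "C (i, j, d - (i + j))
    = sc ((-1) ^ (i + j) / (fact i * fact j)) ((Dh2 n ^^ j) ((Dh3 n ^^ i) (c 0 0)))"
proof -
  have "(Dh2 n ^^ j) ((Dh3 n ^^ i) (c 0 0)) = (Dh2 n ^^ j) (sc ((-1) ^ i * fact i) (C (i, 0, d - i)))"
    using assms by (simp add: c00_eq_C Dh3_funpow_C00)
  also have "\<dots> = sc ((-1) ^ i * fact i) ((Dh2 n ^^ j) (C (i, 0, d - i)))"
    by (simp only: Dh2_def der_funpow_sc)
  also have "\<dots> = sc ((-1) ^ i * fact i * ((-1) ^ j * fact j)) (C (i, j, d - (i + j)))"
    using assms by (simp add: Dh2_funpow_C)
  finally have "(Dh2 n ^^ j) ((Dh3 n ^^ i) (c 0 0))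
      = sc ((-1) ^ i * fact i * ((-1) ^ j * fact j)) (C (i, j, d - (i + j)))" .
  moreover have "(-1) ^ (i + j) / (fact i * fact j) * ((-1) ^ i * fact i * ((-1) ^ j * fact j)) = (1::'k)"
    by (simp add: power_add field_simps flip: power_mult_distrib)
  ultimately show ?thesis
    by simp
qed

lemma f_eq_Dh_funpow_c00:
  "f = (\<Sum>i\<le>d. \<Sum>j\<le>d - i.
     sc ((-1) ^ (i + j) / (fact i * fact j))
       ((Dh2 n ^^ j) ((Dh3 n ^^ i) (c 0 0)) * uu 3 ^ (d - (i + j)) * uu 1 ^ i * uu 2 ^ j))"
proof -
  have "sc (multinom d i j) (c i j * p)
      = sc ((-1) ^ (i + j) / (fact i * fact j)) ((Dh2 n ^^ j) ((Dh3 n ^^ i) (c 0 0)) * p)"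
    if "i + j \<le> d" for i j p
    using C_eq_Dh_funpow_c00[OF that] by (simp add: C_def flip: sc_mult_left)
  then show ?thesis
    unfolding f_eq multinom_def[symmetric] by (intro sum.cong refl) (simp add: mult.assoc)
qed

lemma c00_neq_zero:
  assumes "f \<noteq> 0"
  shows "c 0 0 \<noteq> 0"
  using assms f_eq_Dh_funpow_c00 by (auto simp: Dh2_def Dh3_def der_funpow_zero)

lemma highest_vector_c00:
  assumes "f \<noteq> 0"
  shows "highest_vector n 0 d (c 0 0)"
proof -
  have "(0, 0, d) \<in> triples d"
    by (simp add: triples_def)
  then show ?thesis
    using c00_neq_zero[OF assms]
    by (simp add: highest_vector_def c00_eq_C D1_C D2_C D3_C E1_C E2_C)
qed

lemma Cd_elem_eq_sum_C:
  assumes "p \<in> Cd"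
  obtains \<mu> where "p = (\<Sum>t\<in>triples d. sc (\<mu> t) (C t))"
proof -
  have "c i j \<in> {\<Sum>t\<in>triples d. sc (\<mu> t) (C t) | \<mu>. True}" if "i + j \<le> d" for i j
  proof -
    define \<mu> :: "nat \<times> nat \<times> nat \<Rightarrow> 'k"
      where "\<mu> t = (if t = (i, j, d - (i + j)) then inverse (multinom d i j) else 0)" for t
    have "c i j = (\<Sum>t\<in>triples d. sc (\<mu> t) (C t))"
      using that c_eq_C[OF that] finite_triples
      by (simp add: \<mu>_def if_distrib[of "\<lambda>x. sc x _"] sum.delta triples_def cong: if_cong)
    then show ?thesis
      by blast
  qed
  then have "Cd \<subseteq> {\<Sum>t\<in>triples d. sc (\<mu> t) (C t) | \<mu>. True}"
    by (intro kspan_least subspace_linear_combinations) auto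
  with assms that show thesis
    by blast
qed

lemma sl3_submodule_Cd: "sl3_submodule n Cd"
  unfolding sl3_submodule_def
proof (intro conjI ballI)
  show "Cd \<subseteq> KA n"
    by (rule kspan_least[OF subspace_KA]) (auto intro: c_KA)
  show "subspace_pol Cd"
    by (rule subspace_kspan)
next
  fix D :: "'k pol \<Rightarrow> 'k pol" and p assume "D \<in> sl3_ops n" "p \<in> Cd"
  then obtain \<delta> :: "var \<Rightarrow> 'k pol" and \<kappa> \<sigma> where D: "D = der \<delta>" "\<forall>v\<in>Avars n. \<delta> v \<in> KA n"
    "\<And>t. der \<delta> (umonom t) = sc (\<kappa> t) (umonom (\<sigma> t))"
    using sl3_op_monomial_derivation by blast
  have "der \<delta> f = 0"
    using \<open>D \<in> sl3_ops n\<close> D(1) sl3_op_annihilates_f by blast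
  have "der \<delta> q \<in> Cd" if q_in: "q \<in> {c i j | i j. i + j \<le> d}" for q
  proof -
    obtain i j where q: "q = c i j" "i + j \<le> d"
      using q_in by blast
    then have "der \<delta> (C (i, j, d - (i + j)))
        = - (\<Sum>t\<in>{t\<in>triples d. \<sigma> t = (i, j, d - (i + j))}. sc (\<kappa> t) (C t))"
      using C_relation[OF D(2,3) \<open>der \<delta> f = 0\<close>] by (simp add: triples_def)
    also have "\<dots> \<in> Cd"
      using C_in_Cd by (intro subspace_uminus subspace_sum subspace_sc subspace_kspan) auto
    finally show ?thesis
      using q c_eq_C[of i j "d - (i + j)"] by (simp add: der_sc subspace_sc[OF subspace_kspan])
  qed
  then show "D p \<in> Cd"
    using der_kspan_closed \<open>p \<in> Cd\<close> D(1) by blast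
qed

lemma Cd_subset_submodule:
  assumes "sl3_submodule n W" "c 0 0 \<in> W"
  shows "Cd \<subseteq> W"
proof (rule kspan_least)
  show sub: "subspace_pol W"
    using assms(1) by (simp add: sl3_submodule_def)
  have closed: "(Dh2 n ^^ j) ((Dh3 n ^^ i) (c 0 0)) \<in> W" for i j
    using assms by (intro funpow_closed) (auto simp: sl3_submodule_def sl3_ops_def)
  show "{c i j | i j. i + j \<le> d} \<subseteq> W"
  proof
    fix q assume "q \<in> {c i j | i j. i + j \<le> d}"
    then obtain i j where q: "q = c i j" "i + j \<le> d"
      by blast
    have "C (i, j, d - (i + j)) \<in> W"
      unfolding C_eq_Dh_funpow_c00[OF q(2)] using closed sub by (rule subspace_sc[rotated])
    then show "q \<in> W"
      using q c_eq_C sub subspace_sc by metis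
  qed
qed

lemma lowering_C_self:
  assumes "(i, j, k) \<in> triples d"
  obtains \<kappa> where "\<kappa> \<noteq> 0" "(D3 n ^^ i) ((D2 n ^^ j) (C (i, j, k))) = sc \<kappa> (C (0, 0, d))"
proof -
  define \<kappa>1 :: 'k where "\<kappa>1 = (\<Prod>l<j. - of_nat (Suc (k + l)))"
  define \<kappa>2 :: 'k where "\<kappa>2 = (\<Prod>l<i. - of_nat (Suc (k + j + l)))"
  have "(D2 n ^^ j) (C (i, j, k)) = sc \<kappa>1 (C (i, 0, k + j))"
    using D2_funpow_C[OF assms order_refl] by (simp add: \<kappa>1_def)
  moreover have "(D3 n ^^ i) (C (i, 0, k + j)) = sc \<kappa>2 (C (0, 0, d))"
    using D3_funpow_C[of i 0 "k + j" i] assms by (simp add: \<kappa>2_def triples_def add.commute)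
  ultimately have "(D3 n ^^ i) ((D2 n ^^ j) (C (i, j, k))) = sc (\<kappa>1 * \<kappa>2) (C (0, 0, d))"
    by (simp add: der_funpow_sc[where \<delta> = "gD3 n", folded D3_def] mult.commute)
  moreover have "\<kappa>1 * \<kappa>2 \<noteq> 0"
    by (simp add: \<kappa>1_def \<kappa>2_def del: of_nat_Suc)
  ultimately show thesis
    using that by blast
qed

lemma lowering_C_other:
  assumes "(a, b, e) \<in> triples d" "(i, j, k) \<in> triples d" "k \<le> e" "(a, b, e) \<noteq> (i, j, k)"
  shows "(D3 n ^^ i) ((D2 n ^^ j) (C (a, b, e))) = 0"
proof (cases "b < j")
  case True
  then show ?thesis
    by (simp add: D2_funpow_C_vanish[OF assms(1)] D3_def der_funpow_zero)
next
  case False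
  then have "a < i"
    using assms by (auto simp: triples_def)
  moreover have "(a, b - j, e + j) \<in> triples d"
    using assms(1) False by (simp add: triples_def)
  ultimately show ?thesis
    using False by (simp add: D2_funpow_C[OF assms(1)] der_funpow_sc[where \<delta> = "gD3 n", folded D3_def]
        D3_funpow_C_vanish)
qed

lemma lowering_sum_C:
  assumes "(i, j, k) \<in> triples d"
    and min: "\<And>a b e. (a, b, e) \<in> triples d \<Longrightarrow> \<mu> (a, b, e) \<noteq> 0 \<Longrightarrow> k \<le> e"
  shows "(D3 n ^^ i) ((D2 n ^^ j) (\<Sum>t\<in>triples d. sc (\<mu> t) (C t)))
    = sc (\<mu> (i, j, k)) ((D3 n ^^ i) ((D2 n ^^ j) (C (i, j, k))))"
proof -
  have "sc (\<mu> t) ((D3 n ^^ i) ((D2 n ^^ j) (C t))) = 0"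
    if "t \<in> triples d" "t \<noteq> (i, j, k)" for t
  proof (cases "\<mu> t = 0")
    case False
    obtain a b e where "t = (a, b, e)"
      by (cases t)
    then show ?thesis
      using that False min lowering_C_other[OF _ assms(1)] by auto
  qed simp
  then have "(\<Sum>t\<in>triples d. sc (\<mu> t) ((D3 n ^^ i) ((D2 n ^^ j) (C t))))
      = (\<Sum>t\<in>triples d. if t = (i, j, k) then sc (\<mu> t) ((D3 n ^^ i) ((D2 n ^^ j) (C t))) else 0)"
    by (intro sum.cong) auto
  then show ?thesis
    using assms(1) finite_triples
    by (simp add: sum.delta D2_def D3_def der_funpow_sum der_funpow_sc)
qed

lemma c00_in_nonzero_submodule:
  assumes "W \<subseteq> Cd" "sl3_submodule n W" "W \<noteq> {0}"
  shows "c 0 0 \<in> W"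
proof -
  have sub: "subspace_pol W" and closed: "\<And>D p. D \<in> sl3_ops n \<Longrightarrow> p \<in> W \<Longrightarrow> D p \<in> W"
    using assms(2) by (auto simp: sl3_submodule_def)
  obtain w where "w \<in> W" "w \<noteq> 0"
    using assms(3) sub by (auto simp: subspace_pol_def)
  then obtain \<mu> where w: "w = (\<Sum>t\<in>triples d. sc (\<mu> t) (C t))"
    using Cd_elem_eq_sum_C assms(1) by blast
  then have "\<exists>t. t \<in> triples d \<and> \<mu> t \<noteq> 0"
    using \<open>w \<noteq> 0\<close> by (metis (mono_tags, lifting) sc_zero_left sum.neutral)
  then obtain i j k where ijk: "(i, j, k) \<in> triples d" "\<mu> (i, j, k) \<noteq> 0"
    and min: "\<And>a b e. (a, b, e) \<in> triples d \<Longrightarrow> \<mu> (a, b, e) \<noteq> 0 \<Longrightarrow> k \<le> e"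
    using ex_has_least_nat[of "\<lambda>t. t \<in> triples d \<and> \<mu> t \<noteq> 0" _ "\<lambda>t. snd (snd t)"]
    by (metis prod.collapse snd_conv)
  obtain \<kappa> where "\<kappa> \<noteq> 0" and \<kappa>: "(D3 n ^^ i) ((D2 n ^^ j) (C (i, j, k))) = sc \<kappa> (C (0, 0, d))"
    using lowering_C_self[OF ijk(1)] .
  have "C (0, 0, d) = sc (inverse (\<mu> (i, j, k) * \<kappa>)) ((D3 n ^^ i) ((D2 n ^^ j) w))"
    using \<kappa> \<open>\<kappa> \<noteq> 0\<close> ijk(2) lowering_sum_C[OF ijk(1) min] by (simp add: w field_simps)
  also have "\<dots> \<in> W"
    using \<open>w \<in> W\<close> closed by (intro subspace_sc[OF sub] funpow_closed) (auto simp: sl3_ops_def)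
  finally show ?thesis
    by (simp add: c00_eq_C)
qed

lemma irreducible_Cd:
  assumes "f \<noteq> 0"
  shows "irreducible_sl3_submodule n Cd"
  unfolding irreducible_sl3_submodule_def
proof (intro conjI allI impI)
  show "sl3_submodule n Cd"
    by (rule sl3_submodule_Cd)
  show "Cd \<noteq> {0}"
    using c_in_Cd[of 0 0] c00_neq_zero[OF assms] by auto
next
  fix W assume "W \<subseteq> Cd" "sl3_submodule n W"
  then show "W = {0} \<or> W = Cd"
    using c00_in_nonzero_submodule Cd_subset_submodule by blast
qed

end

lemma finite_coeff_set: "finite {c i j | i j. i + j \<le> (d::nat)}"
proof -
  have "{c i j | i j. i + j \<le> d} \<subseteq> (\<lambda>(i, j). c i j) ` ({..d} \<times> {..d})"
    by force
  then show ?thesis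
    by (rule finite_subset) auto
qed

theorem mainTheorem6:
  fixes n d :: nat and f :: "'k::field_char_0 pol" and c :: "nat \<Rightarrow> nat \<Rightarrow> 'k pol"
  assumes "n \<ge> 1"
    and cA: "\<And>i j. i + j \<le> d \<Longrightarrow> c i j \<in> KA n"
    and f_def: "f = (\<Sum>i\<le>d. \<Sum>j\<le>d - i.
                   sc (fact d / (fact i * fact j * fact (d - (i + j))))
                      (c i j * uu 3 ^ (d - (i + j)) * uu 1 ^ i * uu 2 ^ j))"
    and irr: "irreducible_contravariant n d f"
  shows "is_Gamma n 0 d (kspan {c i j | i j. i + j \<le> d})
       \<and> c 0 0 \<in> kspan {c i j | i j. i + j \<le> d} \<and> highest_vector n 0 d (c 0 0)
       \<and> f = (\<Sum>i\<le>d. \<Sum>j\<le>d - i.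
                sc ((-1) ^ (i + j) / (fact i * fact j))
                   ((Dh2 n ^^ j) ((Dh3 n ^^ i) (c 0 0)) * uu 3 ^ (d - (i + j)) * uu 1 ^ i * uu 2 ^ j))"
proof -
  interpret contravariant_expansion n d f c
    using cA f_def irr by unfold_locales (simp_all add: irreducible_contravariant_def)
  have "f \<noteq> 0"
    using irr by (simp add: irreducible_contravariant_def)
  have "is_Gamma n 0 d Cd"
    unfolding is_Gamma_def
    using finite_coeff_set irreducible_Cd[OF \<open>f \<noteq> 0\<close>] c_in_Cd[of 0 0] highest_vector_c00[OF \<open>f \<noteq> 0\<close>]
    by auto
  then show ?thesis
    using c_in_Cd[of 0 0] highest_vector_c00[OF \<open>f \<noteq> 0\<close>] f_eq_Dh_funpow_c00 by simp
qed

end
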